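(* If $d$ is a squarefree integer such that $H^d(\mathbb{Q})\neq\emptyset$, then $H^d(\mathbb{Q})$ is infinite.
   Context: $H^d$ denotes the genus one curve $d y^2=(x^2-x-3)(x^2+2x-12)$ (smooth projective model). *)

theory Defs
  imports Complex_Main "HOL-Computational_Algebra.Squarefree"
begin

text \<open>Homogenised quartic: F(X,Z) = Z^4 f(X/Z) with f(x) = (x^2-x-3)(x^2+2x-12).\<close>
definition quarticF :: "rat \<Rightarrow> rat \<Rightarrow> rat" where
  "quarticF X Z = (X^2 - X*Z - 3*Z^2) * (X^2 + 2*X*Z - 12*Z^2)"

text \<open>Smooth projective model of d y^2 = f(x) in the weighted projective plane P(1,2,1):
  nonzero rational triples (X,Y,Z) with d Y^2 = F(X,Z), modulo (X,Y,Z) ~ (l X, l^2 Y, l Z).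
  Affine points (x,y) correspond to (x,y,1); Z = 0 gives the points at infinity.\<close>
definition H_cone :: "int \<Rightarrow> (rat \<times> rat \<times> rat) set" where
  "H_cone d = {(X,Y,Z). (X,Y,Z) \<noteq> (0,0,0) \<and> of_int d * Y^2 = quarticF X Z}"

definition wproj_rel :: "((rat \<times> rat \<times> rat) \<times> (rat \<times> rat \<times> rat)) set" where
  "wproj_rel = {((X,Y,Z),(X',Y',Z')). \<exists>l::rat. l \<noteq> 0 \<and> X' = l*X \<and> Y' = l^2*Y \<and> Z' = l*Z}"

definition H_rat_points :: "int \<Rightarrow> (rat \<times> rat \<times> rat) set set" where
  "H_rat_points d = H_cone d // wproj_rel"

end

theory Submission
  imports Defs
begin

(*
  The quartic admits a polynomial self-map of degree 9: for binary forms N, D of degree 9 and S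
  of degree 16 one has F(N, D) = S^2 F, so (X, Y, Z) |-> (N(X,Z), S(X,Z) Y, D(X,Z)) maps H^d(Q)
  to itself for every d. On a primitive integral representative (p, q) the height
  H = max(|p|, |q|) strictly increases: Bezout identities show that gcd(N(p,q), D(p,q)) divides
  R = 2^14 3^8 13, while certified lower bounds on both affine charts give
  max(|N(p,q)|, |D(p,q)|) >= H^9 / 100. For H > 25 this exceeds R H, and the finitely many smaller
  primitive pairs are checked by evaluation. So the heights along the orbit of one rational point
  increase strictly, and the orbit consists of infinitely many distinct points.
*)

lemma infinite_if_height_increasing_self_map:
  fixes h :: "'a \<Rightarrow> 'b::linorder" and f :: "'a \<Rightarrow> 'a" and c :: "'a \<Rightarrow> 'c"
  assumes "P s\<^sub>0"
    and "\<And>s. P s \<Longrightarrow> P (f s)" "\<And>s. P s \<Longrightarrow> h s < h (f s)"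
    and "\<And>s. P s \<Longrightarrow> c s \<in> A"
    and "\<And>s s'. P s \<Longrightarrow> P s' \<Longrightarrow> c s = c s' \<Longrightarrow> h s = h s'"
  shows "infinite A"
proof -
  define orbit where "orbit n = (f ^^ n) s\<^sub>0" for n
  have P_orbit: "P (orbit n)" for n
    by (induction n) (simp_all add: orbit_def assms(1,2))
  have "strict_mono (h \<circ> orbit)"
    using P_orbit assms(3) by (simp add: strict_mono_Suc_iff orbit_def)
  then have "inj (c \<circ> orbit)"
    using P_orbit assms(5) by (auto intro!: injI dest: strict_mono_eq)
  then have "infinite (range (c \<circ> orbit))"
    using finite_imageD by blast
  moreover have "range (c \<circ> orbit) \<subseteq> A"
    using P_orbit assms(4) by auto
  ultimately show ?thesis
    using finite_subset by blast
qed

lemma coprime_proportional_abs_eq_1: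
  fixes p q p' q' :: int and l :: rat
  assumes "coprime p q" "coprime p' q'"
    and "of_int p' = l * of_int p" "of_int q' = l * of_int q"
  shows "\<bar>l\<bar> = 1"
proof -
  obtain a b where ab: "quotient_of l = (a, b)"
    by (cases "quotient_of l") auto
  have l: "l = of_int a / of_int b" and "0 < b" and "coprime a b"
    using quotient_of_div[OF ab] quotient_of_denom_pos[OF ab] quotient_of_coprime[OF ab] by auto
  have "of_int (b * p') = (of_int (a * p) :: rat)" "of_int (b * q') = (of_int (a * q) :: rat)"
    using assms(3,4) \<open>0 < b\<close> by (simp_all add: l field_simps)
  then have p': "b * p' = a * p" and q': "b * q' = a * q"
    by (simp_all only: of_int_eq_iff)
  then have "b dvd p" "b dvd q"
    using \<open>coprime a b\<close> by (metis coprime_commute coprime_dvd_mult_right_iff dvd_triv_left)+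
  then have "b = 1"
    using \<open>0 < b\<close> assms(1) coprime_common_divisor by fastforce
  then have "a dvd p'" "a dvd q'"
    using p' q' by simp_all
  then have "\<bar>a\<bar> = 1"
    using assms(2) coprime_common_divisor by fastforce
  then show ?thesis
    using \<open>b = 1\<close> l by simp
qed

lemma rat_pair_primitive_multiple:
  fixes X Z :: rat
  assumes "(X, Z) \<noteq> (0, 0)"
  obtains l p q where "coprime p q" "of_int p = l * X" "of_int q = l * Z"
proof -
  obtain a b where ab: "quotient_of X = (a, b)"
    by (cases "quotient_of X") auto
  obtain c e where ce: "quotient_of Z = (c, e)"
    by (cases "quotient_of Z") auto
  have X: "X = of_int a / of_int b" and "0 < b"
    using quotient_of_div[OF ab] quotient_of_denom_pos[OF ab] by auto
  have Z: "Z = of_int c / of_int e" and "0 < e"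
    using quotient_of_div[OF ce] quotient_of_denom_pos[OF ce] by auto
  define u v where "u = a * e" and "v = c * b"
  have "(u, v) \<noteq> (0, 0)"
    using assms \<open>0 < b\<close> \<open>0 < e\<close> unfolding X Z u_def v_def by auto
  define g where "g = gcd u v"
  have "g \<noteq> 0"
    using \<open>(u, v) \<noteq> (0, 0)\<close> unfolding g_def by simp
  define l where "l = of_int (b * e) / (of_int g :: rat)"
  have "coprime (u div g) (v div g)"
    using div_gcd_coprime[of u v] \<open>(u, v) \<noteq> (0, 0)\<close> unfolding g_def by simp
  moreover have "of_int (u div g) = l * X" "of_int (v div g) = l * Z"
    using \<open>0 < b\<close> \<open>0 < e\<close> \<open>g \<noteq> 0\<close>
    unfolding l_def X Z u_def v_def g_def by (simp_all add: of_int_div field_simps)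
  ultimately show ?thesis
    using that by blast
qed

section \<open>Lower bounds for integer polynomials on an interval\<close>

fun horner :: "int list \<Rightarrow> 'a::comm_ring_1 \<Rightarrow> 'a" where
  "horner [] x = 0"
| "horner (c # cs) x = of_int c + x * horner cs x"

fun coeffs_plus :: "int list \<Rightarrow> int list \<Rightarrow> int list" where
  "coeffs_plus [] ds = ds"
| "coeffs_plus cs [] = cs"
| "coeffs_plus (c # cs) (d # ds) = (c + d) # coeffs_plus cs ds"

lemma horner_coeffs_plus: "horner (coeffs_plus cs ds) x = horner cs x + horner ds x"
  by (induction cs ds rule: coeffs_plus.induct) (simp_all add: algebra_simps)

lemma horner_map_uminus: "horner (map uminus cs) x = - horner cs x"
  by (induction cs) (simp_all add: algebra_simps)

definition coeffs_times_linear :: "int \<Rightarrow> int list \<Rightarrow> int list" where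
  "coeffs_times_linear k cs = coeffs_plus (map ((*) k) cs) (0 # cs)"

lemma horner_map_times: "horner (map ((*) k) cs) x = of_int k * horner cs x"
  by (induction cs) (simp_all add: algebra_simps)

lemma horner_coeffs_times_linear: "horner (coeffs_times_linear k cs) x = (of_int k + x) * horner cs x"
  unfolding coeffs_times_linear_def by (simp add: horner_coeffs_plus horner_map_times algebra_simps)

fun coeffs_taylor_shift :: "int \<Rightarrow> int list \<Rightarrow> int list" where
  "coeffs_taylor_shift k [] = []"
| "coeffs_taylor_shift k (c # cs) = coeffs_plus [c] (coeffs_times_linear k (coeffs_taylor_shift k cs))"

lemma horner_coeffs_taylor_shift: "horner (coeffs_taylor_shift k cs) x = horner cs (of_int k + x)"
  by (induction cs) (simp_all add: horner_coeffs_plus horner_coeffs_times_linear)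

fun coeffs_scale :: "int \<Rightarrow> int list \<Rightarrow> int list" where
  "coeffs_scale M [] = []"
| "coeffs_scale M (c # cs) = c * M ^ length cs # coeffs_scale M cs"

lemma horner_coeffs_scale:
  "horner (coeffs_scale M cs) (of_int M * x) = of_int M ^ (length cs - 1) * horner cs x"
proof (induction cs)
  case Nil
  then show ?case by simp
next
  case (Cons c cs)
  show ?case
  proof (cases cs)
    case Nil
    then show ?thesis by simp
  next
    case (Cons d ds)
    then have power: "of_int M * of_int M ^ (length cs - 1) = (of_int M ^ length cs :: 'a)"
      by simp
    have "horner (coeffs_scale M (c # cs)) (of_int M * x)
        = of_int c * of_int M ^ length cs + x * (of_int M * of_int M ^ (length cs - 1)) * horner cs x"
      using Cons.IH by (simp add: mult.assoc mult.left_commute)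
    also have "\<dots> = of_int M ^ (length (c # cs) - 1) * horner (c # cs) x"
      unfolding power by (simp add: algebra_simps)
    finally show ?thesis .
  qed
qed

fun unit_interval_lower_bound :: "int list \<Rightarrow> int" where
  "unit_interval_lower_bound [] = 0"
| "unit_interval_lower_bound (c # cs) = c + min 0 (unit_interval_lower_bound cs)"

lemma horner_ge_unit_interval_lower_bound:
  fixes u :: "'a::linordered_idom"
  assumes "0 \<le> u" "u \<le> 1"
  shows "of_int (unit_interval_lower_bound cs) \<le> horner cs u"
proof (induction cs)
  case Nil
  then show ?case by simp
next
  case (Cons c cs)
  define l where "l = unit_interval_lower_bound cs"
  have "of_int (min 0 l) \<le> u * horner cs u"
  proof (cases "0 \<le> l")
    case True
    then have "0 \<le> horner cs u"
      using Cons.IH unfolding l_def by (meson of_int_0_le_iff order_trans)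
    then show ?thesis using True assms by simp
  next
    case False
    have "of_int l \<le> u * of_int l"
      using False assms mult_right_mono_neg[of u 1 "of_int l"] by simp
    also have "\<dots> \<le> u * horner cs u"
      using Cons.IH assms unfolding l_def by (simp add: mult_left_mono)
    finally show ?thesis using False by simp
  qed
  then show ?case unfolding l_def by simp
qed

(* For k \<le> M t \<le> k + 1, the value M^(length P - 1) * P(t) is the polynomial
   coeffs_taylor_shift k (coeffs_scale M P) evaluated at the point M t - k of [0, 1]. *)
definition cell_certified :: "int \<Rightarrow> int \<Rightarrow> int list \<Rightarrow> int \<Rightarrow> bool" where
  "cell_certified c M P k \<longleftrightarrow>
     M ^ (length P - 1) \<le> c * unit_interval_lower_bound (coeffs_taylor_shift k (coeffs_scale M P))"

lemma cell_certified_imp_lower_bound: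
  fixes t :: "'a::linordered_field"
  assumes cert: "cell_certified c M P k" and "0 < c" "0 < M"
    and cell: "of_int k \<le> of_int M * t" "of_int M * t \<le> of_int k + 1"
  shows "1 / of_int c \<le> horner P t"
proof -
  let ?n = "length P - 1" and ?Q = "coeffs_taylor_shift k (coeffs_scale M P)"
  have "of_int (M ^ ?n) \<le> (of_int (c * unit_interval_lower_bound ?Q) :: 'a)"
    using cert unfolding cell_certified_def of_int_le_iff .
  also have "\<dots> \<le> of_int c * horner ?Q (of_int M * t - of_int k)"
    using cell \<open>0 < c\<close> horner_ge_unit_interval_lower_bound[of "of_int M * t - of_int k" ?Q]
    by simp
  also have "\<dots> = of_int c * (of_int M ^ ?n * horner P t)"
    by (simp add: horner_coeffs_taylor_shift horner_coeffs_scale)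
  finally have "of_int M ^ ?n * 1 \<le> of_int M ^ ?n * (of_int c * horner P t)"
    by (simp add: algebra_simps)
  then have "1 \<le> of_int c * horner P t"
    using \<open>0 < M\<close> by (simp add: mult_le_cancel_left_pos)
  then show ?thesis
    using \<open>0 < c\<close> by (simp add: divide_le_eq mult.commute)
qed

definition sign_certified :: "int \<Rightarrow> int \<Rightarrow> int list \<Rightarrow> int list \<Rightarrow> int \<Rightarrow> bool" where
  "sign_certified c M P Q k \<longleftrightarrow>
     (\<exists>R \<in> {P, map uminus P, Q, map uminus Q}. cell_certified c M R k)"

lemma sign_certified_imp_max_abs_lower_bound:
  fixes t :: "'a::floor_ceiling"
  assumes cert: "list_all (sign_certified c M P Q) [-M..M-1]" and "0 < c" "0 < M"
    and "\<bar>t\<bar> \<le> 1"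
  shows "1 / of_int c \<le> max \<bar>horner P t\<bar> \<bar>horner Q t\<bar>"
proof -
  define k where "k = (if t = 1 then M - 1 else \<lfloor>of_int M * t\<rfloor>)"
  have cell: "of_int k \<le> of_int M * t" "of_int M * t \<le> of_int k + 1"
    unfolding k_def using \<open>\<bar>t\<bar> \<le> 1\<close> floor_correct[of "of_int M * t"] by auto
  have "- of_int M \<le> of_int M * t" "t \<noteq> 1 \<Longrightarrow> of_int M * t < of_int M"
    using \<open>0 < M\<close> \<open>\<bar>t\<bar> \<le> 1\<close> mult_left_mono[of "-1" t "of_int M"]
      mult_strict_left_mono[of t 1 "of_int M"] by (auto simp: abs_le_iff)
  then have "-M \<le> k" "k \<le> M - 1"
    unfolding k_def using \<open>0 < M\<close> by (auto simp: le_floor_iff floor_less_iff)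
  then have "sign_certified c M P Q k"
    using cert by (simp add: list_all_iff)
  then obtain R where R: "R \<in> {P, map uminus P, Q, map uminus Q}" "cell_certified c M R k"
    unfolding sign_certified_def by blast
  have "1 / of_int c \<le> horner R t"
    using cell_certified_imp_lower_bound[OF R(2) \<open>0 < c\<close> \<open>0 < M\<close> cell] .
  with R(1) show ?thesis
    by (auto simp: horner_map_uminus)
qed

section \<open>A self-map of degree 9\<close>

definition N_form :: "'a::comm_ring_1 \<Rightarrow> 'a \<Rightarrow> 'a" where
  "N_form X Z = -62208*Z^9 + 66096*X*Z^8 + 25920*X^2*Z^7 - 56736*X^3*Z^6 + 19008*X^4*Z^5
    + 3240*X^5*Z^4 - 2544*X^6*Z^3 + 72*X^7*Z^2 + 144*X^8*Z - 21*X^9"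

definition D_form :: "'a::comm_ring_1 \<Rightarrow> 'a \<Rightarrow> 'a" where
  "D_form X Z = -27216*Z^9 + 31104*X*Z^8 + 2592*X^2*Z^7 - 15264*X^3*Z^6 + 3240*X^4*Z^5
    + 3168*X^5*Z^4 - 1576*X^6*Z^3 + 120*X^7*Z^2 + 51*X^8*Z - 8*X^9"

definition S_form :: "'a::comm_ring_1 \<Rightarrow> 'a \<Rightarrow> 'a" where
  "S_form X Z = 45349632*Z^16 - 362797056*X*Z^15 + 806215680*X^2*Z^14 - 924908544*X^3*Z^13
    + 641426688*X^4*Z^12 - 225566208*X^5*Z^11 - 54577152*X^6*Z^10 + 119155968*X^7*Z^9
    - 69223392*X^8*Z^8 + 19859328*X^9*Z^7 - 1516032*X^10*Z^6 - 1044288*X^11*Z^5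
    + 494928*X^12*Z^4 - 118944*X^13*Z^3 + 17280*X^14*Z^2 - 1296*X^15*Z + 27*X^16"

lemma quarticF_N_D: "quarticF (N_form X Z) (D_form X Z) = (S_form X Z)^2 * quarticF X Z"
  unfolding quarticF_def N_form_def D_form_def S_form_def by algebra

lemma N_D_bezout_Z:
  "(-465567768*Z^8 + 294542352*X*Z^7 + 197440236*X^2*Z^6 - 161032484*X^3*Z^5 - 28193874*X^4*Z^4
      + 40201260*X^5*Z^3 - 6121303*X^6*Z^2 - 1183335*X^7*Z + 260520*X^8) * N_form X Z
   + (1064103552*Z^8 - 587785896*X*Z^7 - 749784816*X^2*Z^6 + 588961812*X^3*Z^5 - 19747548*X^4*Z^4
      - 67104702*X^5*Z^3 + 8759436*X^6*Z^2 + 3435975*X^7*Z - 683865*X^8) * D_form X Z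
   = 1397440512 * (Z::int)^17"
  unfolding N_form_def D_form_def by algebra

lemma N_D_bezout_X:
  "(-7976601360*Z^8 + 6679535400*X*Z^7 + 2838057264*X^2*Z^6 - 3623653908*X^3*Z^5
      - 177727932*X^4*Z^4 + 883442718*X^5*Z^3 - 187446204*X^6*Z^2 - 24491079*X^7*Z + 7389608*X^8)
      * N_form X Z
   + (18232231680*Z^8 - 13802419440*X*Z^7 - 11899813032*X^2*Z^6 + 13025208240*X^3*Z^5
      - 1522469196*X^4*Z^4 - 1449292356*X^5*Z^3 + 296160354*X^6*Z^2 + 73635588*X^7*Z - 19398657*X^8)
      * D_form X Z
   = 7488 * (X::int)^17"
  unfolding N_form_def D_form_def by algebra

lemma N_form_homogeneous: "N_form (l * X) (l * Z) = l^9 * N_form X (Z::'a::idom)"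
  unfolding N_form_def by algebra

lemma D_form_homogeneous: "D_form (l * X) (l * Z) = l^9 * D_form X (Z::'a::idom)"
  unfolding D_form_def by algebra

lemma of_int_N_form: "of_int (N_form p q) = N_form (of_int p) (of_int q)"
  unfolding N_form_def by simp

lemma of_int_D_form: "of_int (D_form p q) = D_form (of_int p) (of_int q)"
  unfolding D_form_def by simp

lemma of_int_S_form: "of_int (S_form p q) = S_form (of_int p) (of_int q)"
  unfolding S_form_def by simp

definition N_coeffs :: "int list" where
  "N_coeffs = [-62208, 66096, 25920, -56736, 19008, 3240, -2544, 72, 144, -21]"

definition D_coeffs :: "int list" where
  "D_coeffs = [-27216, 31104, 2592, -15264, 3240, 3168, -1576, 120, 51, -8]"

lemma N_form_dehomogenize:
  fixes x :: "'a::idom"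
  shows "N_form x 1 = horner N_coeffs x" "N_form 1 x = horner (rev N_coeffs) x"
  unfolding N_form_def N_coeffs_def by (simp, algebra)+

lemma D_form_dehomogenize:
  fixes x :: "'a::idom"
  shows "D_form x 1 = horner D_coeffs x" "D_form 1 x = horner (rev D_coeffs) x"
  unfolding D_form_def D_coeffs_def by (simp, algebra)+

lemma N_D_charts_sign_certified:
  "list_all (sign_certified 100 64 N_coeffs D_coeffs) [-64..63]"
  "list_all (sign_certified 100 64 (rev N_coeffs) (rev D_coeffs)) [-64..63]"
  by code_simp+

lemma chart_lower_bound:
  fixes a t :: real
  assumes "list_all (sign_certified 100 64 P Q) [-64..63]" "\<bar>t\<bar> \<le> 1"
  shows "\<bar>a\<bar> ^ 9 \<le> 100 * max \<bar>a ^ 9 * horner P t\<bar> \<bar>a ^ 9 * horner Q t\<bar>"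
proof -
  have "1 \<le> 100 * max \<bar>horner P t\<bar> \<bar>horner Q t\<bar>"
    using sign_certified_imp_max_abs_lower_bound[of 100 64 P Q t] assms by simp
  then have "\<bar>a\<bar> ^ 9 * 1 \<le> \<bar>a\<bar> ^ 9 * (100 * max \<bar>horner P t\<bar> \<bar>horner Q t\<bar>)"
    by (intro mult_left_mono) simp_all
  then show ?thesis
    by (simp add: abs_mult power_abs max_mult_distrib_left mult.left_commute)
qed

lemma N_D_max_abs_lower_bound:
  fixes x z :: real
  shows "max \<bar>x\<bar> \<bar>z\<bar> ^ 9 \<le> 100 * max \<bar>N_form x z\<bar> \<bar>D_form x z\<bar>"
proof (cases "\<bar>z\<bar> \<le> \<bar>x\<bar>")
  case True
  show ?thesis
  proof (cases "x = 0")
    case True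
    with \<open>\<bar>z\<bar> \<le> \<bar>x\<bar>\<close> show ?thesis
      by (simp add: N_form_def D_form_def)
  next
    case False
    define t where "t = z / x"
    have "\<bar>t\<bar> \<le> 1" "z = x * t"
      using \<open>\<bar>z\<bar> \<le> \<bar>x\<bar>\<close> False by (simp_all add: t_def abs_divide divide_le_eq)
    then have "N_form x z = x ^ 9 * horner (rev N_coeffs) t"
      "D_form x z = x ^ 9 * horner (rev D_coeffs) t"
      using N_form_homogeneous[of x 1 t] D_form_homogeneous[of x 1 t]
      by (simp_all add: N_form_dehomogenize D_form_dehomogenize)
    then show ?thesis
      using chart_lower_bound[OF N_D_charts_sign_certified(2) \<open>\<bar>t\<bar> \<le> 1\<close>, of x] True by simp
  qed
next
  case False
  define t where "t = x / z"
  have "\<bar>t\<bar> \<le> 1" "x = z * t"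
    using False by (simp_all add: t_def abs_divide divide_le_eq)
  then have "N_form x z = z ^ 9 * horner N_coeffs t" "D_form x z = z ^ 9 * horner D_coeffs t"
    using N_form_homogeneous[of z t 1] D_form_homogeneous[of z t 1]
    by (simp_all add: N_form_dehomogenize D_form_dehomogenize)
  then show ?thesis
    using chart_lower_bound[OF N_D_charts_sign_certified(1) \<open>\<bar>t\<bar> \<le> 1\<close>, of z] False by simp
qed

lemma N_D_max_abs_lower_bound_int:
  fixes p q :: int
  shows "max \<bar>p\<bar> \<bar>q\<bar> ^ 9 \<le> 100 * max \<bar>N_form p q\<bar> \<bar>D_form p q\<bar>"
proof -
  have "real_of_int (max \<bar>p\<bar> \<bar>q\<bar> ^ 9) \<le> of_int (100 * max \<bar>N_form p q\<bar> \<bar>D_form p q\<bar>)"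
    using N_D_max_abs_lower_bound[of "of_int p" "of_int q"]
    by (simp add: of_int_N_form of_int_D_form of_int_max)
  then show ?thesis
    by (simp only: of_int_le_iff)
qed

lemma gcd_N_D_dvd:
  fixes p q :: int
  assumes "coprime p q"
  shows "gcd (N_form p q) (D_form p q) dvd 1397440512"
proof -
  let ?g = "gcd (N_form p q) (D_form p q)"
  have "?g dvd 1397440512 * q ^ 17"
    unfolding N_D_bezout_Z[where X = p and Z = q, symmetric]
    by (intro dvd_add dvd_mult gcd_dvd1 gcd_dvd2)
  moreover have "?g dvd 7488 * p ^ 17"
    unfolding N_D_bezout_X[where X = p and Z = q, symmetric]
    by (intro dvd_add dvd_mult gcd_dvd1 gcd_dvd2)
  then have "?g dvd 1397440512 * p ^ 17"
    using dvd_mult[of ?g "7488 * p ^ 17" 186624] by (simp add: algebra_simps)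
  ultimately have "?g dvd gcd (1397440512 * q ^ 17) (1397440512 * p ^ 17)"
    by simp
  also have "\<dots> = 1397440512"
    using assms by (simp add: gcd_mult_left coprime_commute)
  finally show ?thesis .
qed

fun hom_horner :: "int list \<Rightarrow> int \<Rightarrow> int \<Rightarrow> int \<times> int" where
  "hom_horner [] x z = (0, 1)"
| "hom_horner (c # cs) x z = (case hom_horner cs x z of (v, w) \<Rightarrow> (c * w + x * v, z * w))"

lemma N_form_hom_horner: "N_form p q = fst (hom_horner N_coeffs p q)"
  unfolding N_form_def N_coeffs_def by simp algebra

lemma D_form_hom_horner: "D_form p q = fst (hom_horner D_coeffs p q)"
  unfolding D_form_def D_coeffs_def by simp algebra

(* Horner evaluation and the preliminary gcd with 1397440512 (harmless by gcd_N_D_dvd) only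
   serve to keep the numbers in this symbolic evaluation small. *)
lemma N_D_height_growth_check:
  "list_all (\<lambda>p. list_all (\<lambda>q. if gcd p q = 1 then
       (let n = N_form p q; d = D_form p q
        in gcd (gcd 1397440512 n) d * max \<bar>p\<bar> \<bar>q\<bar> < max \<bar>n\<bar> \<bar>d\<bar>)
     else True) [0..25]) [-25..25]"
  unfolding N_form_hom_horner D_form_hom_horner by code_simp

lemma N_D_height_growth_small:
  fixes p q :: int
  assumes "coprime p q" "max \<bar>p\<bar> \<bar>q\<bar> \<le> 25" "0 \<le> q"
  shows "gcd (N_form p q) (D_form p q) * max \<bar>p\<bar> \<bar>q\<bar> < max \<bar>N_form p q\<bar> \<bar>D_form p q\<bar>"
proof -
  have "p \<in> set [-25..25]" "q \<in> set [0..25]"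
    unfolding set_upto using assms by auto
  then have "gcd (gcd 1397440512 (N_form p q)) (D_form p q) * max \<bar>p\<bar> \<bar>q\<bar>
      < max \<bar>N_form p q\<bar> \<bar>D_form p q\<bar>"
    using N_D_height_growth_check assms(1)
    unfolding list_all_iff coprime_iff_gcd_eq_1 Let_def by fastforce
  moreover have "gcd (gcd 1397440512 (N_form p q)) (D_form p q) = gcd (N_form p q) (D_form p q)"
    using gcd_N_D_dvd[OF assms(1)] by (simp add: gcd.assoc gcd_proj2_if_dvd)
  ultimately show ?thesis
    by simp
qed

lemma N_D_height_growth_nonneg:
  fixes p q :: int
  assumes "coprime p q" "0 \<le> q"
  shows "gcd (N_form p q) (D_form p q) * max \<bar>p\<bar> \<bar>q\<bar> < max \<bar>N_form p q\<bar> \<bar>D_form p q\<bar>"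
proof (cases "max \<bar>p\<bar> \<bar>q\<bar> \<le> 25")
  case True
  then show ?thesis using N_D_height_growth_small assms by blast
next
  case False
  define H where "H = max \<bar>p\<bar> \<bar>q\<bar>"
  define g where "g = gcd (N_form p q) (D_form p q)"
  have "26 \<le> H"
    using False unfolding H_def by linarith
  have "0 \<le> g" "g \<le> 1397440512"
    unfolding g_def using gcd_N_D_dvd[OF assms(1)] by (auto intro: zdvd_imp_le)
  then have "100 * (g * H) \<le> 100 * 1397440512 * H"
    using \<open>26 \<le> H\<close> by (simp add: mult_right_mono)
  also have "\<dots> < 26 ^ 8 * H"
    using \<open>26 \<le> H\<close> by simp
  also have "\<dots> \<le> H ^ 8 * H"
    using \<open>26 \<le> H\<close> by (intro mult_right_mono power_mono) simp_all
  also have "\<dots> = H ^ 9"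
    by algebra
  also have "\<dots> \<le> 100 * max \<bar>N_form p q\<bar> \<bar>D_form p q\<bar>"
    using N_D_max_abs_lower_bound_int[of p q] unfolding H_def .
  finally show ?thesis
    unfolding g_def H_def by simp
qed

lemma N_D_height_growth:
  fixes p q :: int
  assumes "coprime p q"
  shows "gcd (N_form p q) (D_form p q) * max \<bar>p\<bar> \<bar>q\<bar> < max \<bar>N_form p q\<bar> \<bar>D_form p q\<bar>"
proof (cases "0 \<le> q")
  case True
  then show ?thesis using N_D_height_growth_nonneg assms by blast
next
  case False
  have "N_form (-p) (-q) = - N_form p q" "D_form (-p) (-q) = - D_form p q"
    using N_form_homogeneous[of "-1" p q] D_form_homogeneous[of "-1" p q] by simp_all
  moreover have "gcd (N_form (-p) (-q)) (D_form (-p) (-q)) * max \<bar>-p\<bar> \<bar>-q\<bar>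
      < max \<bar>N_form (-p) (-q)\<bar> \<bar>D_form (-p) (-q)\<bar>"
    using False assms by (intro N_D_height_growth_nonneg) auto
  ultimately show ?thesis
    by simp
qed

section \<open>Rational points of the curve\<close>

lemma quarticF_scale: "quarticF (l * a) (l * b) = l^4 * quarticF a b"
  unfolding quarticF_def by algebra

definition primitive_point :: "int \<Rightarrow> int \<times> int \<times> rat \<Rightarrow> bool" where
  "primitive_point d =
     (\<lambda>(p, q, y). coprime p q \<and> of_int d * y^2 = quarticF (of_int p) (of_int q))"

definition naive_height :: "int \<times> int \<times> rat \<Rightarrow> int" where
  "naive_height = (\<lambda>(p, q, y). max \<bar>p\<bar> \<bar>q\<bar>)"

definition point_class :: "int \<times> int \<times> rat \<Rightarrow> (rat \<times> rat \<times> rat) set" where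
  "point_class = (\<lambda>(p, q, y). wproj_rel `` {(of_int p, y, of_int q)})"

(* Division by g with the weights (1, 2, 1) of the weighted projective plane. *)
definition primitive_part :: "int \<times> int \<times> rat \<Rightarrow> int \<times> int \<times> rat" where
  "primitive_part = (\<lambda>(n, m, y). let g = gcd n m in (n div g, m div g, y / of_int g ^ 2))"

definition curve_step :: "int \<times> int \<times> rat \<Rightarrow> int \<times> int \<times> rat" where
  "curve_step = (\<lambda>(p, q, y). primitive_part (N_form p q, D_form p q, of_int (S_form p q) * y))"

lemma primitive_point_primitive_part:
  assumes "(n, m) \<noteq> (0, 0)" "of_int d * y^2 = quarticF (of_int n) (of_int m)"
  shows "primitive_point d (primitive_part (n, m, y))"
proof -
  define g where "g = gcd n m"
  have "g \<noteq> 0"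
    using assms(1) unfolding g_def by simp
  have "of_int (n div g) = (1 / of_int g) * (of_int n :: rat)"
    "of_int (m div g) = (1 / of_int g) * (of_int m :: rat)"
    unfolding g_def by (simp_all add: of_int_div)
  then have "quarticF (of_int (n div g)) (of_int (m div g)) = (1 / of_int g)^4 * (of_int d * y^2)"
    using assms(2) quarticF_scale[of "1 / of_int g" "of_int n" "of_int m"] by simp
  also have "\<dots> = of_int d * (y / of_int g ^ 2)^2"
    by (simp add: power_divide flip: power_mult)
  finally show ?thesis
    using div_gcd_coprime[of n m] assms(1)
    unfolding primitive_point_def primitive_part_def g_def by (simp add: Let_def)
qed

lemma naive_height_primitive_part:
  "gcd n m * naive_height (primitive_part (n, m, y)) = max \<bar>n\<bar> \<bar>m\<bar>"
proof -
  define g where "g = gcd n m"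
  have "0 \<le> g" "n = g * (n div g)" "m = g * (m div g)"
    unfolding g_def by simp_all
  then have "\<bar>n\<bar> = g * \<bar>n div g\<bar>" "\<bar>m\<bar> = g * \<bar>m div g\<bar>"
    by (metis abs_mult abs_of_nonneg)+
  then show ?thesis
    unfolding naive_height_def primitive_part_def g_def
    by (simp add: Let_def max_mult_distrib_left)
qed

lemma primitive_point_curve_step:
  assumes "primitive_point d s"
  shows "primitive_point d (curve_step s)"
proof -
  obtain p q y where s: "s = (p, q, y)"
    by (cases s) auto
  have "coprime p q" and curve: "of_int d * y^2 = quarticF (of_int p) (of_int q)"
    using assms unfolding s primitive_point_def by auto
  let ?N = "N_form p q" and ?D = "D_form p q"
  have "(?N, ?D) \<noteq> (0, 0)"
    using N_D_height_growth[OF \<open>coprime p q\<close>] by auto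
  moreover have "of_int d * (of_int (S_form p q) * y)^2 = quarticF (of_int ?N) (of_int ?D)"
    unfolding of_int_N_form of_int_D_form quarticF_N_D of_int_S_form curve[symmetric]
    by (simp add: power_mult_distrib)
  ultimately show ?thesis
    unfolding s curve_step_def by (simp add: primitive_point_primitive_part)
qed

lemma naive_height_curve_step_gt:
  assumes "primitive_point d s"
  shows "naive_height s < naive_height (curve_step s)"
proof -
  obtain p q y where s: "s = (p, q, y)"
    by (cases s) auto
  have "coprime p q"
    using assms unfolding s primitive_point_def by auto
  let ?N = "N_form p q" and ?D = "D_form p q"
  have "gcd ?N ?D * naive_height s < gcd ?N ?D * naive_height (curve_step s)"
    using N_D_height_growth[OF \<open>coprime p q\<close>] naive_height_primitive_part[of ?N ?D]
    unfolding s curve_step_def naive_height_def by simp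
  then show ?thesis
    by (simp add: mult_less_cancel_left)
qed

lemma point_class_mem_H_rat_points:
  assumes "primitive_point d s"
  shows "point_class s \<in> H_rat_points d"
proof -
  obtain p q y where s: "s = (p, q, y)"
    by (cases s) auto
  have "coprime p q" "of_int d * y^2 = quarticF (of_int p) (of_int q)"
    using assms unfolding s primitive_point_def by auto
  then have "(of_int p, y, of_int q) \<in> H_cone d"
    unfolding H_cone_def by auto
  then show ?thesis
    unfolding H_rat_points_def point_class_def s by (auto intro: quotientI)
qed

lemma naive_height_eq_if_point_class_eq:
  assumes "primitive_point d s" "primitive_point d s'" "point_class s = point_class s'"
  shows "naive_height s = naive_height s'"
proof -
  obtain p q y where s: "s = (p, q, y)"
    by (cases s) auto
  obtain p' q' y' where s': "s' = (p', q', y')"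
    by (cases s') auto
  have "((of_int p', y', of_int q'), (of_int p', y', of_int q')) \<in> wproj_rel"
    unfolding wproj_rel_def by (auto intro!: exI[of _ 1])
  then have "((of_int p, y, of_int q), (of_int p', y', of_int q')) \<in> wproj_rel"
    using assms(3) unfolding point_class_def s s' by auto
  then obtain l :: rat where l: "of_int p' = l * of_int p" "of_int q' = l * of_int q"
    unfolding wproj_rel_def by auto
  have "\<bar>l\<bar> = 1"
    using coprime_proportional_abs_eq_1[OF _ _ l] assms(1,2)
    unfolding s s' primitive_point_def by auto
  then have "\<bar>p'\<bar> = \<bar>p\<bar>" "\<bar>q'\<bar> = \<bar>q\<bar>"
    using l by (metis abs_mult mult_1 of_int_abs of_int_eq_iff)+
  then show ?thesis
    unfolding naive_height_def s s' by simp
qed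

lemma primitive_point_exists:
  assumes "d \<noteq> 0" "H_rat_points d \<noteq> {}"
  obtains s where "primitive_point d s"
proof -
  obtain X Y Z where "(X, Y, Z) \<in> H_cone d"
    using assms(2) unfolding H_rat_points_def by (auto elim!: quotientE)
  then have curve: "of_int d * Y^2 = quarticF X Z" and "(X, Y, Z) \<noteq> (0, 0, 0)"
    unfolding H_cone_def by auto
  have "(X, Z) \<noteq> (0, 0)"
    using curve \<open>(X, Y, Z) \<noteq> (0, 0, 0)\<close> assms(1) by (auto simp: quarticF_def)
  then obtain l p q where "coprime p q" "of_int p = l * X" "of_int q = l * Z"
    by (rule rat_pair_primitive_multiple)
  moreover have "of_int d * (l^2 * Y)^2 = quarticF (l * X) (l * Z)"
    unfolding quarticF_scale curve[symmetric] by algebra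
  ultimately show ?thesis
    using that[of "(p, q, l^2 * Y)"] unfolding primitive_point_def by simp
qed

theorem mainTheorem9:
  fixes d :: int
  assumes "squarefree d"
    and "H_rat_points d \<noteq> {}"
  shows "infinite (H_rat_points d)"
proof -
  have "d \<noteq> 0"
    using assms(1) by auto
  then obtain s\<^sub>0 where "primitive_point d s\<^sub>0"
    using assms(2) by (rule primitive_point_exists)
  then show ?thesis
    using primitive_point_curve_step naive_height_curve_step_gt
      point_class_mem_H_rat_points naive_height_eq_if_point_class_eq
    by (rule infinite_if_height_increasing_self_map)
qed

end
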